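(* Let $A\in\mathbb{C}^{n\times n}$, $B\in\mathbb{C}^{n\times m}$, $C\in\mathbb{C}^{p\times n}$, let $j\ge 1$, and let $\mathcal{R}(X):=A^HX+XA+C^HC-XBB^HX$. Suppose $A^HV_{j+1}\underline{K}_j=V_{j+1}\underline{H}_j$ is an orthonormal block rational Arnoldi decomposition (as defined in the context) with $V_{j+1}\in\mathbb{C}^{n\times (j+1)p}$, $\underline{K}_j,\underline{H}_j\in\mathbb{C}^{(j+1)p\times jp}$, where $\underline{K}_j$ has full column rank $jp$, and let $\tilde C\in\mathbb{C}^{(j+1)p\times p}$ satisfy $C^H=V_{j+1}\tilde C$. Let $\underline{L}_j\in\mathbb{C}^{(j+1)p\times jp}$ be such that $\underline{L}_j^H\underline{K}_j$ is nonsingular. Define $$A_j=\underline{H}_j^H\underline{L}_j(\underline{K}_j^H\underline{L}_j)^{-1},\quad B_j=\underline{K}_j^HV_{j+1}^HB,\quad C_j=\tilde C^H\underline{L}_j(\underline{K}_j^H\underline{L}_j)^{-1},$$ let $Y_j=Y_j^H\in\mathbb{C}^{jp\times jp}$ be a Hermitian solution of $A_j^HY_j+Y_jA_j+C_j^HC_j-Y_jB_jB_j^HY_j=0$, and set $X_j=V_{j+1}\underline{K}_jY_j\underline{K}_j^HV_{j+1}^H$. Let $U\in\mathbb{C}^{(j+1)p\times p}$ be a matrix whose columns form a basis of $\operatorname{range}(\underline{L}_j)^\perp$ and $W\in\mathbb{C}^{(j+1)p\times p}$ a matrix whose columns form a basis of $\operatorname{range}(\underline{K}_j)^\perp$ (orthogonal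 complements in $\mathbb{C}^{(j+1)p}$). Then $W^HU$ is nonsingular; define $$T=\underline{K}_jY_j\underline{H}_j^HW(U^HW)^{-1}+\bigl(\tilde C-\tfrac12 U(W^HU)^{-1}W^H\tilde C\bigr)\tilde C^HW(U^HW)^{-1}\in\mathbb{C}^{(j+1)p\times p},$$ and let $[U~~T]=QR$ be an economy-size QR decomposition with $Q\in\mathbb{C}^{(j+1)p\times 2p}$ having orthonormal columns and $R\in\mathbb{C}^{2p\times 2p}$. Then $\mathcal{R}(X_j)=V_{j+1}(UT^H+TU^H)V_{j+1}^H$, so $\operatorname{rank}\mathcal{R}(X_j)\le 2p$, and for every unitarily invariant norm $\|\cdot\|$, $$\|\mathcal{R}(X_j)\|=\left\|R\begin{bmatrix}0&I_p\\ I_p&0\end{bmatrix}R^H\right\|.$$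
   Context: Shifts: a set $\mathcal{S}_j=\{s_1,\dots,s_j\}\subset\mathbb{C}$ (finite) disjoint from the spectrum of $A^H$. The block rational Krylov space is $\mathfrak{K}_{j+1}=\operatorname{range}([C^H,(A^H-s_1I)^{-1}C^H,\dots,(A^H-s_jI)^{-1}C^H])$, assumed to have dimension $(j+1)p$. An orthonormal block rational Arnoldi decomposition (BRAD) is a relation $A^HV_{j+1}\underline{K}_j=V_{j+1}\underline{H}_j$ where: the columns of $V_{j+1}\in\mathbb{C}^{n\times(j+1)p}$ are orthonormal and span $\mathfrak{K}_{j+1}$; $\underline{H}_j,\underline{K}_j\in\mathbb{C}^{(j+1)p\times jp}$ are block upper Hessenberg with $p\times p$ blocks $H_{ik},K_{ik}$, where for each $i=1,\dots,j$ at least one of the subdiagonal blocks $H_{i+1,i},K_{i+1,i}$ is nonsingular and $\beta_iK_{i+1,i}=\gamma_iH_{i+1,i}$ for scalars with $|\beta_i|+|\gamma_i|\neq0$, the quotients $\beta_i/\gamma_i$ (the poles) being the shifts $s_1,\dots,s_j$. Here $\underline{K}_j$ is of full column rank. *)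

theory Defs
  imports "Jordan_Normal_Form.Schur_Decomposition"
          "Jordan_Normal_Form.Gauss_Jordan_Elimination"
          "Jordan_Normal_Form.DL_Rank"
begin

abbreviation adj :: "complex mat \<Rightarrow> complex mat" where
  "adj M \<equiv> mat_adjoint M"

definition inv_m :: "complex mat \<Rightarrow> complex mat" where
  "inv_m M = the (mat_inverse M)"

definition mrank :: "complex mat \<Rightarrow> nat" where
  "mrank M = vec_space.rank (dim_row M) M"

definition col_space :: "complex mat \<Rightarrow> complex vec set" where
  "col_space M = {M *\<^sub>v x | x. x \<in> carrier_vec (dim_col M)}"

definition ortho_compl :: "nat \<Rightarrow> complex vec set \<Rightarrow> complex vec set" where
  "ortho_compl k S = {y \<in> carrier_vec k. \<forall>x\<in>S. conjugate y \<bullet> x = 0}"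

definition cols_basis_of :: "complex mat \<Rightarrow> complex vec set \<Rightarrow> bool" where
  "cols_basis_of M S \<longleftrightarrow> col_space M = S \<and>
     (\<forall>x \<in> carrier_vec (dim_col M). M *\<^sub>v x = 0\<^sub>v (dim_row M) \<longrightarrow> x = 0\<^sub>v (dim_col M))"

definition orthonormal_cols :: "complex mat \<Rightarrow> bool" where
  "orthonormal_cols M \<longleftrightarrow> adj M * M = 1\<^sub>m (dim_col M)"

definition unitary :: "nat \<Rightarrow> complex mat \<Rightarrow> bool" where
  "unitary k M \<longleftrightarrow> M \<in> carrier_mat k k \<and> adj M * M = 1\<^sub>m k \<and> M * adj M = 1\<^sub>m k"

definition hcat :: "complex mat \<Rightarrow> complex mat \<Rightarrow> complex mat" where
  "hcat M N = mat (dim_row M) (dim_col M + dim_col N)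
     (\<lambda>(i,k). if k < dim_col M then M $$ (i,k) else N $$ (i, k - dim_col M))"

text \<open>The (i,k) block (0-based) of size p x p.\<close>
definition blk :: "nat \<Rightarrow> complex mat \<Rightarrow> nat \<Rightarrow> nat \<Rightarrow> complex mat" where
  "blk p M i k = mat p p (\<lambda>(a,b). M $$ (i*p + a, k*p + b))"

text \<open>Block rational Krylov matrix [C^H, (A^H - s_1 I)^{-1} C^H, ..., (A^H - s_j I)^{-1} C^H].\<close>
definition krylov_mat :: "nat \<Rightarrow> nat \<Rightarrow> complex mat \<Rightarrow> complex mat \<Rightarrow> (nat \<Rightarrow> complex) \<Rightarrow> nat \<Rightarrow> complex mat" where
  "krylov_mat n p A C s j = mat n ((j+1)*p) (\<lambda>(r,c).
     if c div p = 0 then adj C $$ (r, c mod p)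
     else (inv_m (adj A - s (c div p) \<cdot>\<^sub>m 1\<^sub>m n) * adj C) $$ (r, c mod p))"

definition is_BRAD :: "nat \<Rightarrow> nat \<Rightarrow> nat \<Rightarrow> complex mat \<Rightarrow> complex mat \<Rightarrow>
    complex mat \<Rightarrow> complex mat \<Rightarrow> complex mat \<Rightarrow> bool" where
  "is_BRAD n p j A C V K H \<longleftrightarrow>
     V \<in> carrier_mat n ((j+1)*p) \<and> K \<in> carrier_mat ((j+1)*p) (j*p) \<and>
     H \<in> carrier_mat ((j+1)*p) (j*p) \<and>
     adj A * V * K = V * H \<and> orthonormal_cols V \<and>
     (\<exists>s :: nat \<Rightarrow> complex.
        (\<forall>i \<in> {1..j}. \<not> eigenvalue (adj A) (s i)) \<and>
        col_space V = col_space (krylov_mat n p A C s j) \<and>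
        mrank (krylov_mat n p A C s j) = (j+1)*p \<and>
        (\<forall>i\<le>j. \<forall>k<j. i > k+1 \<longrightarrow> blk p H i k = 0\<^sub>m p p \<and> blk p K i k = 0\<^sub>m p p) \<and>
        (\<forall>i \<in> {1..j}.
           (invertible_mat (blk p H i (i-1)) \<or> invertible_mat (blk p K i (i-1))) \<and>
           (\<exists>\<beta> \<gamma>::complex. (\<beta> \<noteq> 0 \<or> \<gamma> \<noteq> 0) \<and>
              \<beta> \<cdot>\<^sub>m blk p K i (i-1) = \<gamma> \<cdot>\<^sub>m blk p H i (i-1) \<and>
              \<gamma> \<noteq> 0 \<and> \<beta> / \<gamma> = s i)))"

text \<open>Unitarily invariant norm, as a family over all matrix sizes: a norm on each
  C^{r x c}, invariant under unitary multiplication on both sides, and (as is implicit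
  when comparing norms of matrices of different sizes, i.e. the norm is a symmetric
  gauge function of the singular values) invariant under padding with zeros.\<close>
definition unitarily_invariant_norm :: "(complex mat \<Rightarrow> real) \<Rightarrow> bool" where
  "unitarily_invariant_norm N \<longleftrightarrow>
    (\<forall>r c. \<forall>M \<in> carrier_mat r c. \<forall>M' \<in> carrier_mat r c. \<forall>a::complex.
        N M \<ge> 0 \<and> (N M = 0 \<longleftrightarrow> M = 0\<^sub>m r c) \<and>
        N (a \<cdot>\<^sub>m M) = cmod a * N M \<and> N (M + M') \<le> N M + N M') \<and>
    (\<forall>r c. \<forall>M \<in> carrier_mat r c. \<forall>P Q. unitary r P \<and> unitary c Q \<longrightarrow>
        N (P * M * Q) = N M) \<and>
    (\<forall>r c r' c'. \<forall>M \<in> carrier_mat r c.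
        N (four_block_mat M (0\<^sub>m r c') (0\<^sub>m r' c) (0\<^sub>m r' c')) = N M)"

end

theory Submission
  imports Defs
begin

text \<open>Write G = L (K^H L)^-1, so that A_j = H^H G, C_j = C~^H G, K^H G = I and U^H G = 0.
  Since range W is the orthogonal complement of range K, every vector splits uniquely along
  range G and range W. A vector of range U orthogonal to range W is orthogonal to both parts of
  its own splitting, so W^H U is nonsingular, and then G K^H + W (U^H W)^-1 U^H = I.
  From A^H V K = V H and C^H = V C~ the residual is R(X_j) = V M V^H with the Hermitian matrix
  M = H Y K^H + K Y H^H + C~ C~^H - K Y K^H V^H B B^H V K Y K^H, and the projected Riccati
  equation says precisely G^H M G = 0. Multiplying M by the resolution of the identity on both
  sides, the G^H M G block drops out and the remaining three blocks regroup as T U^H + U T^H.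
  Finally [U T] = Q R turns the residual into (V Q) (R J R^H) (V Q)^H with V Q having orthonormal
  columns, which bounds its rank by 2p and, through a unitary dilation of V Q, preserves every
  unitarily invariant norm.\<close>

lemma mat_adjoint_eq: "adj A = mat (dim_col A) (dim_row A) (\<lambda>(i,k). cnj (A $$ (k,i)))"
  unfolding mat_adjoint_def mat_of_rows_def
  by (intro eq_matI) (auto simp: col_def)

lemma dim_mat_adjoint[simp]: "dim_row (adj A) = dim_col A" "dim_col (adj A) = dim_row A"
  by (simp_all add: mat_adjoint_eq)

lemma index_mat_adjoint[simp]:
  "i < dim_col A \<Longrightarrow> k < dim_row A \<Longrightarrow> adj A $$ (i,k) = cnj (A $$ (k,i))"
  by (simp add: mat_adjoint_eq)

lemma mat_adjoint_carrier[simp]: "A \<in> carrier_mat r c \<Longrightarrow> adj A \<in> carrier_mat c r"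
  unfolding carrier_mat_def by simp

lemma mat_adjoint_adjoint[simp]: "adj (adj A) = A"
  by (intro eq_matI) auto

lemma mat_adjoint_mult:
  assumes "dim_col A = dim_row B"
  shows "adj (A * B) = adj B * adj A"
proof (intro eq_matI)
  fix i k assume i: "i < dim_row (adj B * adj A)" and k: "k < dim_col (adj B * adj A)"
  have "adj (A * B) $$ (i,k) = cnj (row A k \<bullet> col B i)" using i k by simp
  also have "\<dots> = (\<Sum>l\<in>{0..<dim_row B}. cnj (A $$ (k,l)) * cnj (B $$ (l,i)))"
    using i k assms by (simp add: scalar_prod_def)
  also have "\<dots> = row (adj B) i \<bullet> col (adj A) k"
    using i k assms by (simp add: scalar_prod_def mult.commute)
  finally show "adj (A * B) $$ (i,k) = (adj B * adj A) $$ (i,k)" using i k by simp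
qed auto

lemma mat_adjoint_add:
  "dim_row A = dim_row B \<Longrightarrow> dim_col A = dim_col B \<Longrightarrow> adj (A + B) = adj A + adj B"
  by (intro eq_matI) auto

lemma mat_adjoint_minus:
  "dim_row A = dim_row B \<Longrightarrow> dim_col A = dim_col B \<Longrightarrow> adj (A - B) = adj A - adj B"
  by (intro eq_matI) auto

lemma mat_adjoint_smult: "adj (c \<cdot>\<^sub>m A) = cnj c \<cdot>\<^sub>m adj A"
  by (intro eq_matI) auto

lemma mat_adjoint_one[simp]: "adj (1\<^sub>m n) = 1\<^sub>m n"
  by (intro eq_matI) auto

lemma mat_adjoint_zero[simp]: "adj (0\<^sub>m r c) = 0\<^sub>m c r"
  by (intro eq_matI) auto

lemma mat_adjoint_four_block_mat:
  assumes "A \<in> carrier_mat r1 c1" "B \<in> carrier_mat r1 c2" "C \<in> carrier_mat r2 c1" "D \<in> carrier_mat r2 c2"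
  shows "adj (four_block_mat A B C D) = four_block_mat (adj A) (adj C) (adj B) (adj D)"
  using assms by (intro eq_matI) auto

lemma conjugate_sprod_mat_adjoint:
  assumes A: "A \<in> carrier_mat r c" and y: "y \<in> carrier_vec r" and x: "x \<in> carrier_vec c"
  shows "conjugate y \<bullet> (A *\<^sub>v x) = conjugate (adj A *\<^sub>v y) \<bullet> x"
proof -
  have "conjugate y \<bullet> (A *\<^sub>v x) = (\<Sum>i<r. \<Sum>l<c. cnj (y $ i) * A $$ (i,l) * x $ l)"
    using A x y by (simp add: scalar_prod_def lessThan_atLeast0 sum_distrib_left mult.assoc)
  also have "\<dots> = (\<Sum>l<c. \<Sum>i<r. cnj (y $ i) * A $$ (i,l) * x $ l)"
    by (rule sum.swap)
  also have "\<dots> = (\<Sum>l<c. (\<Sum>i<r. cnj (y $ i) * A $$ (i,l)) * x $ l)"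
    by (simp add: sum_distrib_right)
  also have "\<dots> = (\<Sum>l<c. cnj (\<Sum>i<r. cnj (A $$ (i,l)) * y $ i) * x $ l)"
    by (simp add: mult.commute)
  also have "\<dots> = conjugate (adj A *\<^sub>v y) \<bullet> x"
    using A x y by (simp add: scalar_prod_def lessThan_atLeast0)
  finally show ?thesis .
qed

text \<open>Variants of the library's ring laws for matrices whose side conditions only compare
  dimensions, so that the simplifier can discharge them from the dimension facts at hand.\<close>

lemma assoc_mult_mat_dim:
  "dim_col A = dim_row B \<Longrightarrow> dim_col B = dim_row C \<Longrightarrow> A * B * C = A * (B * C)"
  for A B C :: "complex mat"
  by (rule assoc_mult_mat[of A "dim_row A" "dim_col A" B "dim_col B" C "dim_col C"]) auto

lemma mult_add_distrib_mat_dim: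
  "dim_col A = dim_row B \<Longrightarrow> dim_row B = dim_row C \<Longrightarrow> dim_col B = dim_col C \<Longrightarrow>
   A * (B + C) = A * B + A * C" for A B C :: "complex mat"
  by (rule mult_add_distrib_mat[of A "dim_row A" "dim_col A" B "dim_col B" C]) auto

lemma add_mult_distrib_mat_dim:
  "dim_col A = dim_row C \<Longrightarrow> dim_row A = dim_row B \<Longrightarrow> dim_col A = dim_col B \<Longrightarrow>
   (A + B) * C = A * C + B * C" for A B C :: "complex mat"
  by (rule add_mult_distrib_mat[of A "dim_row A" "dim_col A" B C "dim_col C"]) auto

lemma mult_minus_distrib_mat_dim:
  "dim_col A = dim_row B \<Longrightarrow> dim_row B = dim_row C \<Longrightarrow> dim_col B = dim_col C \<Longrightarrow>
   A * (B - C) = A * B - A * C" for A B C :: "complex mat"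
  by (rule mult_minus_distrib_mat[of A "dim_row A" "dim_col A" B "dim_col B" C]) auto

lemma minus_mult_distrib_mat_dim:
  "dim_col A = dim_row C \<Longrightarrow> dim_row A = dim_row B \<Longrightarrow> dim_col A = dim_col B \<Longrightarrow>
   (A - B) * C = A * C - B * C" for A B C :: "complex mat"
  by (rule minus_mult_distrib_mat[of A "dim_row A" "dim_col A" B C "dim_col C"]) auto

lemma mult_smult_distrib_dim:
  "dim_col A = dim_row B \<Longrightarrow> A * (c \<cdot>\<^sub>m B) = c \<cdot>\<^sub>m (A * B)" for A B :: "complex mat"
  by (rule mult_smult_distrib[of A "dim_row A" "dim_col A" B "dim_col B"]) auto

lemma mult_smult_assoc_mat_dim:
  "dim_col A = dim_row B \<Longrightarrow> (c \<cdot>\<^sub>m A) * B = c \<cdot>\<^sub>m (A * B)" for A B :: "complex mat"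
  by (rule mult_smult_assoc_mat[of A "dim_row A" "dim_col A" B "dim_col B"]) auto

lemma comm_add_mat_dim:
  "dim_row A = dim_row B \<Longrightarrow> dim_col A = dim_col B \<Longrightarrow> A + B = B + A" for A B :: "complex mat"
  by (rule comm_add_mat[of A "dim_row A" "dim_col A"]) auto

lemmas mat_ring_dim_simps = assoc_mult_mat_dim mult_add_distrib_mat_dim add_mult_distrib_mat_dim
  mult_minus_distrib_mat_dim minus_mult_distrib_mat_dim mult_smult_distrib_dim mult_smult_assoc_mat_dim

lemma left_add_zero_mat_dim[simp]:
  "dim_row A = r \<Longrightarrow> dim_col A = c \<Longrightarrow> 0\<^sub>m r c + A = A" for A :: "complex mat"
  by (intro eq_matI) auto

lemma right_add_zero_mat_dim[simp]:
  "dim_row A = r \<Longrightarrow> dim_col A = c \<Longrightarrow> A + 0\<^sub>m r c = A" for A :: "complex mat"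
  by (intro eq_matI) auto

lemma minus_zero_mat_dim[simp]:
  "dim_row A = r \<Longrightarrow> dim_col A = c \<Longrightarrow> A - 0\<^sub>m r c = A" for A :: "complex mat"
  by (intro eq_matI) auto

lemma inv_m:
  fixes X :: "complex mat"
  assumes X: "X \<in> carrier_mat n n" and inv: "invertible_mat X"
  shows "inv_m X \<in> carrier_mat n n" "X * inv_m X = 1\<^sub>m n" "inv_m X * X = 1\<^sub>m n"
proof -
  from inv obtain B where XB: "X * B = 1\<^sub>m n" and BX: "B * X = 1\<^sub>m (dim_row B)"
    using X unfolding invertible_mat_def inverts_mat_def by auto
  have "B \<in> carrier_mat n n"
    using XB BX X by (metis carrier_matD carrier_matI index_mult_mat(2,3) index_one_mat(2,3))
  then have "X \<in> Units (ring_mat TYPE(complex) n undefined)"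
    using X XB BX unfolding Units_def ring_mat_def by auto
  then obtain C where C: "mat_inverse X = Some C"
    using mat_inverse(1)[OF X, of undefined] by (cases "mat_inverse X") auto
  from mat_inverse(2)[OF X C]
  show "inv_m X \<in> carrier_mat n n" "X * inv_m X = 1\<^sub>m n" "inv_m X * X = 1\<^sub>m n"
    unfolding inv_m_def C by auto
qed

lemma invertible_mat_if_right_inverse:
  fixes X Y :: "complex mat"
  assumes X: "X \<in> carrier_mat n n" and Y: "Y \<in> carrier_mat n n" and XY: "X * Y = 1\<^sub>m n"
  shows "invertible_mat X"
  using mat_mult_left_right_inverse[OF X Y XY] X Y XY
  unfolding invertible_mat_def inverts_mat_def square_mat.simps by auto

lemma inv_m_unique:
  fixes X Y :: "complex mat"
  assumes X: "X \<in> carrier_mat n n" and Y: "Y \<in> carrier_mat n n" and XY: "X * Y = 1\<^sub>m n"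
  shows "inv_m X = Y"
proof -
  note inv = inv_m[OF X invertible_mat_if_right_inverse[OF X Y XY]]
  have "inv_m X = inv_m X * (X * Y)" using inv XY by simp
  also have "\<dots> = (inv_m X * X) * Y" using assoc_mult_mat[OF inv(1) X Y] by simp
  finally show ?thesis using inv Y by simp
qed

lemma invertible_mat_adjoint_inv_m_adjoint:
  fixes X :: "complex mat"
  assumes X: "X \<in> carrier_mat n n" and inv: "invertible_mat X"
  shows "invertible_mat (adj X)" "inv_m (adj X) = adj (inv_m X)"
proof -
  note Xinv = inv_m[OF X inv]
  have e: "adj X * adj (inv_m X) = 1\<^sub>m n"
    using Xinv X by (metis mat_adjoint_mult mat_adjoint_one carrier_matD(1,2))
  show "invertible_mat (adj X)" "inv_m (adj X) = adj (inv_m X)"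
    using invertible_mat_if_right_inverse[OF _ _ e] inv_m_unique[OF _ _ e] X Xinv by auto
qed

lemma invertible_mat_if_trivial_kernel:
  fixes X :: "complex mat"
  assumes X: "X \<in> carrier_mat n n"
    and ker: "\<And>x. x \<in> carrier_vec n \<Longrightarrow> X *\<^sub>v x = 0\<^sub>v n \<Longrightarrow> x = 0\<^sub>v n"
  shows "invertible_mat X"
proof -
  have "det X \<noteq> 0" using det_0_iff_vec_prod_zero[OF X] ker by auto
  from det_non_zero_imp_unit[OF X this, of undefined]
  obtain Y where "Y \<in> carrier_mat n n" "X * Y = 1\<^sub>m n"
    unfolding Units_def ring_mat_def by auto
  then show ?thesis by (rule invertible_mat_if_right_inverse[OF X])
qed

section \<open>Oblique projections\<close>

lemma mult_unit_vec_eq_col: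
  "A \<in> carrier_mat r c \<Longrightarrow> i < c \<Longrightarrow> A *\<^sub>v unit_vec c i = col A i" for A :: "complex mat"
  by (intro eq_vecI) (auto simp: scalar_prod_right_unit carrier_matD)

lemma col_mem_col_space: "A \<in> carrier_mat r c \<Longrightarrow> i < c \<Longrightarrow> col A i \<in> col_space A"
  unfolding col_space_def by (auto simp: mult_unit_vec_eq_col[symmetric] intro!: exI[of _ "unit_vec c i"])

lemma mat_eq_if_mult_vec_eq:
  fixes P Q :: "complex mat"
  assumes P: "P \<in> carrier_mat n n" and Q: "Q \<in> carrier_mat n n"
    and eq: "\<And>v. v \<in> carrier_vec n \<Longrightarrow> P *\<^sub>v v = Q *\<^sub>v v"
  shows "P = Q"
proof (intro eq_matI)
  fix i l assume i: "i < dim_row Q" and l: "l < dim_col Q"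
  have "col P l = col Q l"
    using eq[of "unit_vec n l"] mult_unit_vec_eq_col[OF P] mult_unit_vec_eq_col[OF Q] l Q by auto
  then show "P $$ (i,l) = Q $$ (i,l)" using i l P Q by (metis carrier_matD(1,2) col_def index_vec)
qed (use P Q in auto)

lemma mat_adjoint_mult_eq_zero_if_cols_orthogonal:
  fixes U L :: "complex mat"
  assumes U: "U \<in> carrier_mat N p" and L: "L \<in> carrier_mat N k"
    and U_basis: "cols_basis_of U (ortho_compl N (col_space L))"
  shows "adj U * L = 0\<^sub>m p k"
proof (intro eq_matI)
  fix i l assume i: "i < dim_row (0\<^sub>m p k :: complex mat)" and l: "l < dim_col (0\<^sub>m p k :: complex mat)"
  have "col U i \<in> ortho_compl N (col_space L)"
    using col_mem_col_space[OF U] U_basis i unfolding cols_basis_of_def by auto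
  with col_mem_col_space[OF L] l have "conjugate (col U i) \<bullet> col L l = 0"
    unfolding ortho_compl_def by auto
  moreover have "row (adj U) i = conjugate (col U i)"
    using U i by (intro eq_vecI) auto
  ultimately show "(adj U * L) $$ (i,l) = 0\<^sub>m p k $$ (i,l)" using U L i l by simp
qed (use U L in auto)

definition oblique_inverse :: "complex mat \<Rightarrow> complex mat \<Rightarrow> complex mat" where
  "oblique_inverse K L = L * inv_m (adj K * L)"

lemma oblique_inverse:
  fixes K L :: "complex mat"
  assumes K: "K \<in> carrier_mat N k" and L: "L \<in> carrier_mat N k" and KL: "invertible_mat (adj K * L)"
  shows "oblique_inverse K L \<in> carrier_mat N k" "adj K * oblique_inverse K L = 1\<^sub>m k"
proof -
  have KLc: "adj K * L \<in> carrier_mat k k" using K L by auto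
  note KLinv = inv_m[OF KLc KL]
  show "oblique_inverse K L \<in> carrier_mat N k"
    unfolding oblique_inverse_def using L KLinv(1) by auto
  show "adj K * oblique_inverse K L = 1\<^sub>m k"
    unfolding oblique_inverse_def using K L KLinv
    by (simp add: assoc_mult_mat_dim[symmetric] carrier_matD)
qed

lemma mat_adjoint_mult_oblique_inverse_eq_zero:
  fixes K L U :: "complex mat"
  assumes K: "K \<in> carrier_mat N k" and L: "L \<in> carrier_mat N k" and U: "U \<in> carrier_mat N p"
    and KL: "invertible_mat (adj K * L)" and UL: "adj U * L = 0\<^sub>m p k"
  shows "adj U * oblique_inverse K L = 0\<^sub>m p k"
proof -
  have "adj K * L \<in> carrier_mat k k" using K L by auto
  then have "inv_m (adj K * L) \<in> carrier_mat k k" using inv_m(1)[OF _ KL] by blast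
  then show ?thesis
    unfolding oblique_inverse_def using K L U UL by (simp add: assoc_mult_mat_dim[symmetric] carrier_matD)
qed

lemma oblique_inverse_mult_vec_mem_col_space:
  fixes K L :: "complex mat"
  assumes K: "K \<in> carrier_mat N k" and L: "L \<in> carrier_mat N k" and KL: "invertible_mat (adj K * L)"
    and a: "a \<in> carrier_vec k"
  shows "oblique_inverse K L *\<^sub>v a \<in> col_space L"
proof -
  have "adj K * L \<in> carrier_mat k k" using K L by auto
  then have Z: "inv_m (adj K * L) \<in> carrier_mat k k" using inv_m(1)[OF _ KL] by blast
  have "oblique_inverse K L *\<^sub>v a = L *\<^sub>v (inv_m (adj K * L) *\<^sub>v a)"
    unfolding oblique_inverse_def by (rule assoc_mult_mat_vec[OF L Z a])
  then show ?thesis unfolding col_space_def using L Z a by auto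
qed

lemma oblique_decomposition:
  fixes K L W :: "complex mat"
  assumes K: "K \<in> carrier_mat N k" and L: "L \<in> carrier_mat N k" and W: "W \<in> carrier_mat N p"
    and KL: "invertible_mat (adj K * L)"
    and W_basis: "cols_basis_of W (ortho_compl N (col_space K))"
    and v: "v \<in> carrier_vec N"
  shows "\<exists>z \<in> carrier_vec p. v = oblique_inverse K L *\<^sub>v (adj K *\<^sub>v v) + W *\<^sub>v z"
proof -
  note G = oblique_inverse[OF K L KL]
  define a where "a = adj K *\<^sub>v v"
  have a: "a \<in> carrier_vec k" unfolding a_def by (intro carrier_vecI) (simp add: carrier_matD[OF K])
  define r where "r = v - oblique_inverse K L *\<^sub>v a"
  have r: "r \<in> carrier_vec N" unfolding r_def using v G(1) a by auto
  have "adj K *\<^sub>v r = adj K *\<^sub>v v - (adj K * oblique_inverse K L) *\<^sub>v a"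
    unfolding r_def using K v G(1) a
    by (simp add: mult_minus_distrib_mat_vec[of _ k N] assoc_mult_mat_vec[of _ k N])
  then have Kr: "adj K *\<^sub>v r = 0\<^sub>v k" unfolding G(2) a_def[symmetric] using a by simp
  have "r \<in> ortho_compl N (col_space K)"
    unfolding ortho_compl_def col_space_def
  proof safe
    fix y :: "complex vec" assume y: "y \<in> carrier_vec (dim_col K)"
    have "conjugate r \<bullet> (K *\<^sub>v y) = conjugate (adj K *\<^sub>v r) \<bullet> y"
      using conjugate_sprod_mat_adjoint[OF K r] y K by simp
    then show "conjugate r \<bullet> (K *\<^sub>v y) = 0" unfolding Kr using y K by simp
  qed (rule r)
  then obtain z where z: "z \<in> carrier_vec p" "r = W *\<^sub>v z"
    using W_basis W unfolding cols_basis_of_def col_space_def by auto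
  have "v = oblique_inverse K L *\<^sub>v a + r" unfolding r_def using v G(1) a by (intro eq_vecI) auto
  with z show ?thesis unfolding a_def by auto
qed

context
  fixes K L U W :: "complex mat" and N k p :: nat
  assumes K: "K \<in> carrier_mat N k" and L: "L \<in> carrier_mat N k"
    and U: "U \<in> carrier_mat N p" and W: "W \<in> carrier_mat N p"
    and KL: "invertible_mat (adj K * L)"
    and U_basis: "cols_basis_of U (ortho_compl N (col_space L))"
    and W_basis: "cols_basis_of W (ortho_compl N (col_space K))"
begin

lemma invertible_complement_product: "invertible_mat (adj W * U)"
proof (rule invertible_mat_if_trivial_kernel)
  show WU: "adj W * U \<in> carrier_mat p p" using U W by auto
  fix x assume x: "x \<in> carrier_vec p" and x0: "(adj W * U) *\<^sub>v x = 0\<^sub>v p"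
  note G = oblique_inverse[OF K L KL]
  define u where "u = U *\<^sub>v x"
  have u: "u \<in> carrier_vec N" unfolding u_def by (intro carrier_vecI) (simp add: carrier_matD[OF U])
  have "u \<in> col_space U" unfolding u_def col_space_def using x U by auto
  then have u_ortho: "u \<in> ortho_compl N (col_space L)" using U_basis unfolding cols_basis_of_def by simp
  obtain z where z: "z \<in> carrier_vec p" and uz: "u = oblique_inverse K L *\<^sub>v (adj K *\<^sub>v u) + W *\<^sub>v z"
    using oblique_decomposition[OF K L W KL W_basis u] by auto
  have Ku: "adj K *\<^sub>v u \<in> carrier_vec k" by (intro carrier_vecI) (simp add: carrier_matD[OF K])
  from oblique_inverse_mult_vec_mem_col_space[OF K L KL Ku]
  have "conjugate u \<bullet> (oblique_inverse K L *\<^sub>v (adj K *\<^sub>v u)) = 0"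
    using u_ortho unfolding ortho_compl_def by auto
  moreover have "adj W *\<^sub>v u = 0\<^sub>v p"
    unfolding u_def using x0 assoc_mult_mat_vec[of "adj W" p N U p x] U W x by simp
  then have "conjugate u \<bullet> (W *\<^sub>v z) = 0"
    using conjugate_sprod_mat_adjoint[OF W u z] z by simp
  moreover have "conjugate u \<bullet> u
      = conjugate u \<bullet> (oblique_inverse K L *\<^sub>v (adj K *\<^sub>v u)) + conjugate u \<bullet> (W *\<^sub>v z)"
    by (subst (2) uz, rule scalar_prod_add_distrib[of _ N]) (use u G Ku W z in auto)
  ultimately have "u \<bullet>c u = 0" using conjugate_vec_sprod_comm[OF u u] by simp
  then have "u = 0\<^sub>v N" using conjugate_square_eq_0_vec[OF u] by simp
  then show "x = 0\<^sub>v p" using U_basis x U unfolding cols_basis_of_def u_def by auto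
qed

lemma oblique_resolution_of_identity:
  "oblique_inverse K L * adj K + W * (inv_m (adj U * W) * adj U) = 1\<^sub>m N"
proof (rule mat_eq_if_mult_vec_eq)
  note G = oblique_inverse[OF K L KL]
  have UW: "adj U * W \<in> carrier_mat p p" using U W by auto
  have WU: "adj W * U \<in> carrier_mat p p" using U W by auto
  have "invertible_mat (adj U * W)"
    using invertible_mat_adjoint_inv_m_adjoint(1)[OF WU invertible_complement_product] U W
    by (simp add: mat_adjoint_mult carrier_matD)
  note Z = inv_m[OF UW this]
  have UG: "adj U * oblique_inverse K L = 0\<^sub>m p k"
    by (rule mat_adjoint_mult_oblique_inverse_eq_zero[OF K L U KL
          mat_adjoint_mult_eq_zero_if_cols_orthogonal[OF U L U_basis]])
  show "oblique_inverse K L * adj K + W * (inv_m (adj U * W) * adj U) \<in> carrier_mat N N"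
    using G K U W Z by auto
  show "1\<^sub>m N \<in> carrier_mat N N" by simp
  fix v :: "complex vec" assume v: "v \<in> carrier_vec N"
  obtain z where z: "z \<in> carrier_vec p" and vz: "v = oblique_inverse K L *\<^sub>v (adj K *\<^sub>v v) + W *\<^sub>v z"
    using oblique_decomposition[OF K L W KL W_basis v] by auto
  have Kv: "adj K *\<^sub>v v \<in> carrier_vec k" by (intro carrier_vecI) (simp add: carrier_matD[OF K])
  have "adj U *\<^sub>v v = adj U *\<^sub>v (oblique_inverse K L *\<^sub>v (adj K *\<^sub>v v)) + adj U *\<^sub>v (W *\<^sub>v z)"
    by (subst vz, rule mult_add_distrib_mat_vec[of _ p N]) (use U G Kv W z in auto)
  also have "\<dots> = (adj U * oblique_inverse K L) *\<^sub>v (adj K *\<^sub>v v) + (adj U * W) *\<^sub>v z"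
    using assoc_mult_mat_vec[of "adj U" p N _ k, OF _ G(1) Kv] assoc_mult_mat_vec[of "adj U" p N W p, OF _ W z] U
    by simp
  also have "\<dots> = (adj U * W) *\<^sub>v z"
  proof -
    have "0\<^sub>m p k *\<^sub>v (adj K *\<^sub>v v) = 0\<^sub>v p" using Kv by (intro eq_vecI) auto
    moreover have "(adj U * W) *\<^sub>v z \<in> carrier_vec p" using UW z by simp
    ultimately show ?thesis unfolding UG by simp
  qed
  finally have "inv_m (adj U * W) *\<^sub>v (adj U *\<^sub>v v) = z"
    using Z z UW by (simp add: assoc_mult_mat_vec[symmetric, of _ p p])
  then show "(oblique_inverse K L * adj K + W * (inv_m (adj U * W) * adj U)) *\<^sub>v v = 1\<^sub>m N *\<^sub>v v"
    using G K U W Z v vz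
      add_mult_distrib_mat_vec[OF mult_carrier_mat[OF G(1) mat_adjoint_carrier[OF K]]
        mult_carrier_mat[OF W mult_carrier_mat[OF Z(1) mat_adjoint_carrier[OF U]]] v]
      assoc_mult_mat_vec[OF G(1) mat_adjoint_carrier[OF K] v]
      assoc_mult_mat_vec[OF W mult_carrier_mat[OF Z(1) mat_adjoint_carrier[OF U]] v]
      assoc_mult_mat_vec[OF Z(1) mat_adjoint_carrier[OF U] v]
    by auto
qed

end

section \<open>Low-rank splitting of a Hermitian matrix\<close>

lemma hermitian_eq_low_rank_sum:
  fixes M K G U W Z :: "complex mat"
  assumes M: "M \<in> carrier_mat N N" and M_herm: "adj M = M"
    and K: "K \<in> carrier_mat N k" and G: "G \<in> carrier_mat N k"
    and U: "U \<in> carrier_mat N p" and W: "W \<in> carrier_mat N p" and Z: "Z \<in> carrier_mat p p"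
    and resolution: "G * adj K + W * (Z * adj U) = 1\<^sub>m N"
    and compression: "adj G * M * G = 0\<^sub>m k k"
    and T_def: "T = K * (adj G * (M * (W * Z))) + (1/2) \<cdot>\<^sub>m (U * (adj Z * (adj W * (M * (W * Z)))))"
  shows "M = T * adj U + U * adj T"
proof -
  note dims = carrier_matD[OF M] carrier_matD[OF K] carrier_matD[OF G]
    carrier_matD[OF U] carrier_matD[OF W] carrier_matD[OF Z]
  have resolution': "K * adj G + U * (adj Z * adj W) = 1\<^sub>m N"
    using arg_cong[OF resolution, of adj] dims
    by (simp add: mat_adjoint_add mat_adjoint_mult assoc_mult_mat_dim)
  have compression': "adj G * (M * (G * X)) = 0\<^sub>m k (dim_col X)" if "dim_row X = k" for X
  proof -
    have "adj G * (M * (G * X)) = (adj G * M * G) * X" using that dims by (simp add: mat_ring_dim_simps)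
    then show ?thesis unfolding compression using that by simp
  qed
  define S where "S = adj Z * (adj W * (M * (W * Z)))"
  define E where "E = adj G * (M * (W * Z))"
  have "M = (K * adj G + U * (adj Z * adj W)) * M * (G * adj K + W * (Z * adj U))"
    unfolding resolution resolution' using M by simp
  also have "\<dots> = U * (adj Z * (adj W * (M * (G * adj K)))) + (K * (E * adj U) + U * (S * adj U))"
    unfolding E_def S_def using dims by (simp add: mat_ring_dim_simps compression')
  also have "\<dots> = (K * E + (1/2) \<cdot>\<^sub>m (U * S)) * adj U
      + U * (adj Z * (adj W * (M * (G * adj K))) + (1/2) \<cdot>\<^sub>m (S * adj U))"
    unfolding E_def S_def using dims by (intro eq_matI) (auto simp: mat_ring_dim_simps)
  also have "\<dots> = T * adj U + U * adj T"
    unfolding T_def E_def S_def using dims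
    by (simp add: mat_ring_dim_simps mat_adjoint_mult mat_adjoint_add mat_adjoint_smult M_herm)
  finally show ?thesis .
qed

section \<open>The Riccati residual in Krylov coordinates\<close>

definition riccati_residual :: "complex mat \<Rightarrow> complex mat \<Rightarrow> complex mat \<Rightarrow> complex mat \<Rightarrow> complex mat" where
  "riccati_residual A B C X = adj A * X + X * A + adj C * C - X * B * adj B * X"

definition residual_coords :: "complex mat \<Rightarrow> complex mat \<Rightarrow> complex mat \<Rightarrow> complex mat \<Rightarrow> complex mat \<Rightarrow> complex mat" where
  "residual_coords H K Ct Bv Y = H * Y * adj K + K * Y * adj H + Ct * adj Ct - K * Y * adj K * Bv * adj Bv * K * Y * adj K"

lemma residual_coords_carrier:
  "H \<in> carrier_mat N k \<Longrightarrow> K \<in> carrier_mat N k \<Longrightarrow> Ct \<in> carrier_mat N p \<Longrightarrow> Bv \<in> carrier_mat N m \<Longrightarrow>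
   Y \<in> carrier_mat k k \<Longrightarrow> residual_coords H K Ct Bv Y \<in> carrier_mat N N"
  unfolding residual_coords_def by (intro carrier_matI) auto

lemma residual_coords_hermitian:
  assumes "H \<in> carrier_mat N k" "K \<in> carrier_mat N k" "Ct \<in> carrier_mat N p" "Bv \<in> carrier_mat N m"
    and "Y \<in> carrier_mat k k" "adj Y = Y"
  shows "adj (residual_coords H K Ct Bv Y) = residual_coords H K Ct Bv Y"
  unfolding residual_coords_def using assms
  by (simp add: carrier_matD mat_ring_dim_simps mat_adjoint_mult mat_adjoint_add mat_adjoint_minus
      comm_add_mat_dim)

lemma riccati_residual_eq_residual_coords:
  fixes A B C V K H Ct Y :: "complex mat"
  assumes A: "A \<in> carrier_mat n n" and B: "B \<in> carrier_mat n m" and V: "V \<in> carrier_mat n N"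
    and K: "K \<in> carrier_mat N k" and H: "H \<in> carrier_mat N k" and Ct: "Ct \<in> carrier_mat N p"
    and Y: "Y \<in> carrier_mat k k"
    and arnoldi: "adj A * V * K = V * H" and C_coords: "adj C = V * Ct"
  shows "riccati_residual A B C (V * K * Y * adj K * adj V) = V * residual_coords H K Ct (adj V * B) Y * adj V"
proof -
  note dims = carrier_matD[OF A] carrier_matD[OF B] carrier_matD[OF V] carrier_matD[OF K]
    carrier_matD[OF H] carrier_matD[OF Ct] carrier_matD[OF Y]
  have arnoldi_left: "adj A * (V * (K * X)) = V * (H * X)" if "dim_row X = k" for X
  proof -
    have "adj A * (V * (K * X)) = (adj A * V * K) * X" using that dims by (simp add: mat_ring_dim_simps)
    then show ?thesis unfolding arnoldi using that dims by (simp add: mat_ring_dim_simps)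
  qed
  have arnoldi_right: "adj K * (adj V * A) = adj H * adj V"
    using arg_cong[OF arnoldi, of adj] dims by (simp add: mat_adjoint_mult mat_ring_dim_simps)
  have "C = adj Ct * adj V" using arg_cong[OF C_coords, of adj] dims by (simp add: mat_adjoint_mult)
  then show ?thesis
    unfolding riccati_residual_def residual_coords_def using dims
    by (simp add: mat_ring_dim_simps mat_adjoint_mult arnoldi_left arnoldi_right)
qed

lemma compress_residual_coords:
  fixes H K Ct Bv Y G :: "complex mat"
  assumes H: "H \<in> carrier_mat N k" and K: "K \<in> carrier_mat N k" and Ct: "Ct \<in> carrier_mat N p"
    and Bv: "Bv \<in> carrier_mat N m" and Y: "Y \<in> carrier_mat k k" and G: "G \<in> carrier_mat N k"
    and KG: "adj K * G = 1\<^sub>m k"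
  shows "adj G * residual_coords H K Ct Bv Y * G
    = riccati_residual (adj H * G) (adj K * Bv) (adj Ct * G) Y"
proof -
  note dims = carrier_matD[OF H] carrier_matD[OF K] carrier_matD[OF Ct] carrier_matD[OF Bv]
    carrier_matD[OF Y] carrier_matD[OF G]
  have GK: "adj G * K = 1\<^sub>m k" using arg_cong[OF KG, of adj] dims by (simp add: mat_adjoint_mult)
  have GK': "adj G * (K * X) = X" if "dim_row X = k" for X
    using that dims by (simp add: assoc_mult_mat_dim[symmetric] GK)
  show ?thesis
    unfolding riccati_residual_def residual_coords_def using dims
    by (simp add: mat_ring_dim_simps mat_adjoint_mult GK' KG)
qed

lemma low_rank_factor_eq:
  fixes H K Ct Bv Y G U W Z :: "complex mat"
  assumes H: "H \<in> carrier_mat N k" and K: "K \<in> carrier_mat N k" and Ct: "Ct \<in> carrier_mat N p"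
    and Bv: "Bv \<in> carrier_mat N m" and Y: "Y \<in> carrier_mat k k" and G: "G \<in> carrier_mat N k"
    and U: "U \<in> carrier_mat N p" and W: "W \<in> carrier_mat N p" and Z: "Z \<in> carrier_mat p p"
    and KG: "adj K * G = 1\<^sub>m k" and KW: "adj K * W = 0\<^sub>m k p"
    and resolution: "G * adj K + W * (Z * adj U) = 1\<^sub>m N"
    and M_def: "M = residual_coords H K Ct Bv Y"
  shows "K * (adj G * (M * (W * Z))) + (1/2) \<cdot>\<^sub>m (U * (adj Z * (adj W * (M * (W * Z)))))
    = K * Y * adj H * W * Z + (Ct - (1/2) \<cdot>\<^sub>m (U * adj Z * adj W * Ct)) * adj Ct * W * Z"
proof -
  note dims = carrier_matD[OF H] carrier_matD[OF K] carrier_matD[OF Ct] carrier_matD[OF Bv]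
    carrier_matD[OF Y] carrier_matD[OF G] carrier_matD[OF U] carrier_matD[OF W] carrier_matD[OF Z]
  have GK: "adj G * K = 1\<^sub>m k" using arg_cong[OF KG, of adj] dims by (simp add: mat_adjoint_mult)
  have WK: "adj W * K = 0\<^sub>m p k" using arg_cong[OF KW, of adj] dims by (simp add: mat_adjoint_mult)
  have resolution': "K * adj G + U * (adj Z * adj W) = 1\<^sub>m N"
    using arg_cong[OF resolution, of adj] dims
    by (simp add: mat_adjoint_add mat_adjoint_mult assoc_mult_mat_dim)
  have GK': "adj G * (K * X) = X" if "dim_row X = k" for X
    using that dims by (simp add: assoc_mult_mat_dim[symmetric] GK)
  have KW': "adj K * (W * X) = 0\<^sub>m k (dim_col X)" if "dim_row X = p" for X
    using that dims by (simp add: assoc_mult_mat_dim[symmetric] KW)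
  have WK': "adj W * (K * X) = 0\<^sub>m p (dim_col X)" if "dim_row X = k" for X
    using that dims by (simp add: assoc_mult_mat_dim[symmetric] WK)
  define Q where "Q = Ct * (adj Ct * (W * Z))"
  define x where "x = K * (adj G * Q)"
  define y where "y = U * (adj Z * (adj W * Q))"
  have Q_split: "Q = x + y"
  proof -
    have "Q = (K * adj G + U * (adj Z * adj W)) * Q" unfolding resolution' Q_def using dims by simp
    then show ?thesis unfolding x_def y_def Q_def using dims by (simp add: mat_ring_dim_simps)
  qed
  have "K * (adj G * (M * (W * Z))) + (1/2) \<cdot>\<^sub>m (U * (adj Z * (adj W * (M * (W * Z)))))
      = K * (Y * (adj H * (W * Z))) + x + (1/2) \<cdot>\<^sub>m y"
    unfolding M_def residual_coords_def x_def y_def Q_def using dims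
    by (simp add: mat_ring_dim_simps GK' KW' WK')
  also have "\<dots> = K * (Y * (adj H * (W * Z))) + (Q - (1/2) \<cdot>\<^sub>m y)"
  proof -
    have "t + x + (1/2) \<cdot>\<^sub>m y = t + ((x + y) - (1/2) \<cdot>\<^sub>m y)"
      if "t \<in> carrier_mat N p" "x \<in> carrier_mat N p" "y \<in> carrier_mat N p" for t x y :: "complex mat"
      using that by (intro eq_matI) auto
    moreover have "x \<in> carrier_mat N p" "y \<in> carrier_mat N p" "K * (Y * (adj H * (W * Z))) \<in> carrier_mat N p"
      unfolding x_def y_def Q_def using dims by (auto intro!: carrier_matI)
    ultimately show ?thesis unfolding Q_split by blast
  qed
  also have "\<dots> = K * Y * adj H * W * Z + (Ct - (1/2) \<cdot>\<^sub>m (U * adj Z * adj W * Ct)) * adj Ct * W * Z"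
    unfolding y_def Q_def using dims by (simp add: mat_ring_dim_simps)
  finally show ?thesis .
qed

section \<open>Rank and unitarily invariant norms\<close>

lemma hcat_eq_four_block_mat:
  "U \<in> carrier_mat N p \<Longrightarrow> T \<in> carrier_mat N q \<Longrightarrow> hcat U T = four_block_mat U T (0\<^sub>m 0 p) (0\<^sub>m 0 q)"
  for U T :: "complex mat"
  unfolding hcat_def by (intro eq_matI) auto

lemma four_block_mat_empty_rows_cols:
  "X \<in> carrier_mat r c \<Longrightarrow> B \<in> carrier_mat r 0 \<Longrightarrow> C \<in> carrier_mat 0 c \<Longrightarrow> D \<in> carrier_mat 0 0 \<Longrightarrow>
   four_block_mat X B C D = X" for X B C D :: "complex mat"
  by (intro eq_matI) auto

lemma hcat_exchange_hcat_adjoint: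
  fixes U T :: "complex mat"
  assumes U: "U \<in> carrier_mat N p" and T: "T \<in> carrier_mat N p"
  shows "hcat U T * four_block_mat (0\<^sub>m p p) (1\<^sub>m p) (1\<^sub>m p) (0\<^sub>m p p) * adj (hcat U T)
     = U * adj T + T * adj U"
proof -
  have hcat: "hcat U T = four_block_mat U T (0\<^sub>m 0 p) (0\<^sub>m 0 p)" by (rule hcat_eq_four_block_mat[OF U T])
  have "hcat U T * four_block_mat (0\<^sub>m p p) (1\<^sub>m p) (1\<^sub>m p) (0\<^sub>m p p) * adj (hcat U T)
      = four_block_mat T U (0\<^sub>m 0 p) (0\<^sub>m 0 p) * four_block_mat (adj U) (0\<^sub>m p 0) (adj T) (0\<^sub>m p 0)"
    unfolding hcat using U T
    by (simp add: mult_four_block_mat[OF U T zero_carrier_mat zero_carrier_mat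
          zero_carrier_mat one_carrier_mat one_carrier_mat zero_carrier_mat]
        mat_adjoint_four_block_mat[OF U T zero_carrier_mat zero_carrier_mat])
  also have "\<dots> = T * adj U + U * adj T"
    by (subst mult_four_block_mat[OF T U zero_carrier_mat zero_carrier_mat mat_adjoint_carrier[OF U]
          zero_carrier_mat mat_adjoint_carrier[OF T] zero_carrier_mat],
        rule four_block_mat_empty_rows_cols) (use U T in auto)
  also have "\<dots> = U * adj T + T * adj U" using U T by (intro comm_add_mat_dim) auto
  finally show ?thesis .
qed

lemma (in vec_space) rank_mult_le_dim_col:
  assumes E: "E \<in> carrier_mat n q" and X: "X \<in> carrier_mat q r"
  shows "rank (E * X) \<le> q"
proof -
  have cols_E: "set (cols E) \<subseteq> carrier_vec n" using E cols_dim by (metis carrier_matD(1))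
  let ?S = "span (set (cols E))"
  have "set (cols (E * X)) \<subseteq> ?S"
  proof
    fix v assume "v \<in> set (cols (E * X))"
    then obtain c where c: "c < dim_col (E * X)" "v = col (E * X) c"
      by (metis cols_length cols_nth in_set_conv_nth)
    have "lincomb_list (\<lambda>i. col X c $ i) (cols E)
        = mat_of_cols n (cols E) *\<^sub>v vec (length (cols E)) (\<lambda>i. col X c $ i)"
      by (rule lincomb_list_as_mat_mult) (use cols_E in auto)
    also have "\<dots> = E *\<^sub>v col X c" using E X by (intro arg_cong2[where f="(*\<^sub>v)"]) (auto intro!: eq_vecI)
    also have "\<dots> = v" using c E X by auto
    finally show "v \<in> ?S" using span_list_as_span[OF cols_E] unfolding span_list_def by auto
  qed
  moreover have vs: "vectorspace class_ring (vs ?S)" using span_is_subspace[THEN subspace_is_vs, OF cols_E] by auto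
  moreover have "submodule class_ring ?S V" using cols_E by (simp add: span_is_submodule)
  ultimately have "VectorSpace.subspace class_ring (span (set (cols (E * X)))) (vs ?S)"
    using vectorspace.span_is_subspace[OF vs, of "set (cols (E * X))"] span_li_not_depend(1) by auto
  then have "rank (E * X) \<le> vectorspace.dim class_ring (vs ?S)"
    unfolding rank_def using vectorspace.subspace_dim[OF vs] fin_dim_span_cols[OF E]
      fin_dim_span_cols[OF mult_carrier_mat[OF E X]] by auto
  also have "\<dots> \<le> q" using rank_le_nc[OF E] unfolding rank_def .
  finally show ?thesis .
qed

lemma mrank_mult_le_dim_col:
  "E \<in> carrier_mat n q \<Longrightarrow> X \<in> carrier_mat q r \<Longrightarrow> mrank (E * X) \<le> q"
  unfolding mrank_def using vec_space.rank_mult_le_dim_col by simp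

lemma exchange_form_eq_qr_congruence:
  fixes V U T Q R :: "complex mat"
  assumes V: "V \<in> carrier_mat n N" and U: "U \<in> carrier_mat N p" and T: "T \<in> carrier_mat N p"
    and Q: "Q \<in> carrier_mat N (2*p)" and R: "R \<in> carrier_mat (2*p) (2*p)" and UT_QR: "hcat U T = Q * R"
  shows "V * (U * adj T + T * adj U) * adj V
    = (V * Q) * (R * four_block_mat (0\<^sub>m p p) (1\<^sub>m p) (1\<^sub>m p) (0\<^sub>m p p) * adj R) * adj (V * Q)"
proof -
  define J where "J = four_block_mat (0\<^sub>m p p) (1\<^sub>m p) (1\<^sub>m p) (0\<^sub>m p p :: complex mat)"
  have J: "J \<in> carrier_mat (2*p) (2*p)" unfolding J_def by (intro carrier_matI) (simp_all add: mult_2)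
  have "U * adj T + T * adj U = Q * R * J * adj (Q * R)"
    unfolding J_def UT_QR[symmetric] by (rule hcat_exchange_hcat_adjoint[OF U T, symmetric])
  then show ?thesis
    unfolding J_def[symmetric] using V Q R J by (simp add: mat_adjoint_mult assoc_mult_mat_dim carrier_matD)
qed

lemma mrank_congruence_le:
  "E \<in> carrier_mat n q \<Longrightarrow> M \<in> carrier_mat q q \<Longrightarrow> mrank (E * M * adj E) \<le> q" for E M :: "complex mat"
  using mrank_mult_le_dim_col[of E n q "M * adj E" n] by (simp add: assoc_mult_mat_dim carrier_matD)

lemma orthonormal_cols_mult:
  fixes V Q :: "complex mat"
  assumes V: "V \<in> carrier_mat n N" and Q: "Q \<in> carrier_mat N q"
    and "adj V * V = 1\<^sub>m N" "adj Q * Q = 1\<^sub>m q"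
  shows "adj (V * Q) * (V * Q) = 1\<^sub>m q"
proof -
  have "adj (V * Q) * (V * Q) = adj Q * (adj V * V) * Q"
    using V Q by (simp add: mat_adjoint_mult assoc_mult_mat_dim carrier_matD)
  also have "\<dots> = 1\<^sub>m q" using assms by simp
  finally show ?thesis .
qed

lemma unitary_adjoint: "unitary k P \<Longrightarrow> unitary k (adj P)"
  unfolding unitary_def by auto

lemma unitary_isometry_dilation:
  fixes E :: "complex mat"
  assumes E: "E \<in> carrier_mat n q" and EE: "adj E * E = 1\<^sub>m q"
  shows "unitary (n + q) (four_block_mat E (1\<^sub>m n - E * adj E) (0\<^sub>m q q) (adj E))"
proof -
  define D where "D = 1\<^sub>m n - E * adj E"
  have D: "D \<in> carrier_mat n n" unfolding D_def using E by auto
  have E': "adj E \<in> carrier_mat q n" using E by simp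
  have DE: "D * E = 0\<^sub>m n q"
  proof -
    have "D * E = E - E * (adj E * E)" unfolding D_def using E by (simp add: mat_ring_dim_simps)
    then show ?thesis using EE E by simp
  qed
  have ED: "adj E * D = 0\<^sub>m q n"
  proof -
    have "adj E * D = adj E - (adj E * E) * adj E" unfolding D_def using E by (simp add: mat_ring_dim_simps)
    then show ?thesis using EE E by simp
  qed
  have DD: "D * D = D"
  proof -
    have "D * D = D * 1\<^sub>m n - D * E * adj E"
      by (subst (2) D_def) (use E D in \<open>simp add: mat_ring_dim_simps\<close>)
    then show ?thesis using DE E D by simp
  qed
  have ED_sum: "E * adj E + D = 1\<^sub>m n" "D + E * adj E = 1\<^sub>m n"
    unfolding D_def using E by (auto intro!: eq_matI)
  have D_herm: "adj D = D" unfolding D_def using E by (simp add: mat_adjoint_minus mat_adjoint_mult)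
  define \<Omega> where "\<Omega> = four_block_mat E D (0\<^sub>m q q) (adj E)"
  have \<Omega>: "\<Omega> \<in> carrier_mat (n + q) (n + q)" unfolding \<Omega>_def using E D
    by (metis add.commute four_block_carrier_mat mat_adjoint_carrier)
  have \<Omega>_adj: "adj \<Omega> = four_block_mat (adj E) (0\<^sub>m q q) D E"
    unfolding \<Omega>_def by (subst mat_adjoint_four_block_mat[OF E D zero_carrier_mat E']) (simp add: D_herm)
  have "\<Omega> * adj \<Omega> = 1\<^sub>m (n + q)"
    unfolding \<Omega>_adj unfolding \<Omega>_def
    by (subst mult_four_block_mat[OF E D zero_carrier_mat E' E' zero_carrier_mat D E])
      (use E D EE DD DE ED ED_sum in simp)
  moreover have "adj \<Omega> * \<Omega> = 1\<^sub>m (n + q)"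
    unfolding \<Omega>_adj unfolding \<Omega>_def
    by (subst mult_four_block_mat[OF E' zero_carrier_mat D E E D zero_carrier_mat E'])
      (use E D EE DD DE ED ED_sum in \<open>simp add: add.commute\<close>)
  ultimately show ?thesis unfolding unitary_def \<Omega>_def[symmetric] D_def[symmetric] using \<Omega> by auto
qed

lemma unitarily_invariant_norm_isometric_congruence:
  fixes E M :: "complex mat"
  assumes norm: "unitarily_invariant_norm \<N>" and E: "E \<in> carrier_mat n q"
    and EE: "adj E * E = 1\<^sub>m q" and M: "M \<in> carrier_mat q q"
  shows "\<N> (E * M * adj E) = \<N> M"
proof -
  define \<Omega> where "\<Omega> = four_block_mat E (1\<^sub>m n - E * adj E) (0\<^sub>m q q) (adj E)"
  have D: "1\<^sub>m n - E * adj E \<in> carrier_mat n n" using E by auto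
  have E': "adj E \<in> carrier_mat q n" using E by simp
  have \<Omega>_adj: "adj \<Omega> = four_block_mat (adj E) (0\<^sub>m q q) (adj (1\<^sub>m n - E * adj E)) E"
    unfolding \<Omega>_def by (subst mat_adjoint_four_block_mat[OF E D zero_carrier_mat E']) simp
  note unitary = unitary_isometry_dilation[OF E EE, folded \<Omega>_def]
  define M' where "M' = four_block_mat M (0\<^sub>m q n) (0\<^sub>m n q) (0\<^sub>m n n)"
  have M': "M' \<in> carrier_mat (n + q) (n + q)" unfolding M'_def using M
    by (metis add.commute four_block_carrier_mat zero_carrier_mat)
  have "\<Omega> * M' * adj \<Omega> = four_block_mat (E * M) (0\<^sub>m n n) (0\<^sub>m q q) (0\<^sub>m q n) * adj \<Omega>"
    unfolding \<Omega>_def M'_def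
    by (subst mult_four_block_mat[OF E D zero_carrier_mat E' M zero_carrier_mat zero_carrier_mat
          zero_carrier_mat]) (use E D M in simp)
  also have "\<dots> = four_block_mat (E * M * adj E) (0\<^sub>m n q) (0\<^sub>m q n) (0\<^sub>m q q)"
    unfolding \<Omega>_adj
    by (subst mult_four_block_mat[OF mult_carrier_mat[OF E M] zero_carrier_mat zero_carrier_mat
          zero_carrier_mat E' zero_carrier_mat mat_adjoint_carrier[OF D] E]) (use E D M in simp)
  finally have "\<N> (E * M * adj E) = \<N> (\<Omega> * M' * adj \<Omega>)"
    using norm E M unfolding unitarily_invariant_norm_def by (metis mult_carrier_mat mat_adjoint_carrier)
  also have "\<dots> = \<N> M'"
    using norm unitary unitary_adjoint[OF unitary] M' unfolding unitarily_invariant_norm_def by blast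
  also have "\<dots> = \<N> M" using norm M unfolding unitarily_invariant_norm_def M'_def by blast
  finally show ?thesis .
qed

lemma riccati_residual_eq_low_rank:
  fixes A B C V K H Ct L Y U W T :: "complex mat"
  assumes A: "A \<in> carrier_mat n n" and B: "B \<in> carrier_mat n m" and V: "V \<in> carrier_mat n N"
    and K: "K \<in> carrier_mat N k" and H: "H \<in> carrier_mat N k" and Ct: "Ct \<in> carrier_mat N p"
    and L: "L \<in> carrier_mat N k" and Y: "Y \<in> carrier_mat k k" and Y_herm: "adj Y = Y"
    and U: "U \<in> carrier_mat N p" and W: "W \<in> carrier_mat N p"
    and arnoldi: "adj A * V * K = V * H" and C_coords: "adj C = V * Ct"
    and KL: "invertible_mat (adj K * L)"
    and riccati: "riccati_residual (adj H * oblique_inverse K L) (adj K * (adj V * B))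
                    (adj Ct * oblique_inverse K L) Y = 0\<^sub>m k k"
    and U_basis: "cols_basis_of U (ortho_compl N (col_space L))"
    and W_basis: "cols_basis_of W (ortho_compl N (col_space K))"
    and T_def: "T = K * Y * adj H * W * inv_m (adj U * W)
        + (Ct - (1/2) \<cdot>\<^sub>m (U * inv_m (adj W * U) * adj W * Ct)) * adj Ct * W * inv_m (adj U * W)"
  shows "riccati_residual A B C (V * K * Y * adj K * adj V) = V * (U * adj T + T * adj U) * adj V"
proof -
  define G where "G = oblique_inverse K L"
  define M where "M = residual_coords H K Ct (adj V * B) Y"
  define Z where "Z = inv_m (adj U * W)"
  note G = oblique_inverse[OF K L KL, folded G_def]
  have Bv: "adj V * B \<in> carrier_mat N m" using V B by auto
  have M: "M \<in> carrier_mat N N" unfolding M_def by (rule residual_coords_carrier[OF H K Ct Bv Y])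
  have WU: "adj W * U \<in> carrier_mat p p" using U W by auto
  note WU_inv = invertible_complement_product[OF K L U W KL U_basis W_basis]
  have Z_eq: "Z = adj (inv_m (adj W * U))"
    unfolding Z_def using invertible_mat_adjoint_inv_m_adjoint(2)[OF WU WU_inv] U W
    by (simp add: mat_adjoint_mult carrier_matD)
  have Z: "Z \<in> carrier_mat p p" unfolding Z_eq using inv_m(1)[OF WU WU_inv] by simp
  have KW: "adj K * W = 0\<^sub>m k p"
    using arg_cong[OF mat_adjoint_mult_eq_zero_if_cols_orthogonal[OF W K W_basis], of adj] K W
    by (simp add: mat_adjoint_mult carrier_matD)
  have resolution: "G * adj K + W * (Z * adj U) = 1\<^sub>m N"
    unfolding G_def Z_def by (rule oblique_resolution_of_identity[OF K L U W KL U_basis W_basis])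
  have "adj G * M * G = 0\<^sub>m k k"
    using compress_residual_coords[OF H K Ct Bv Y G, folded M_def] riccati[folded G_def] by simp
  then have "M = T * adj U + U * adj T"
    using hermitian_eq_low_rank_sum[OF M residual_coords_hermitian[OF H K Ct Bv Y Y_herm, folded M_def]
        K G(1) U W Z resolution] low_rank_factor_eq[OF H K Ct Bv Y G(1) U W Z G(2) KW resolution M_def]
    unfolding T_def Z_def[symmetric] Z_eq by simp
  also have "\<dots> = U * adj T + T * adj U"
    by (rule comm_add_mat_dim) (use K U in \<open>simp_all add: T_def carrier_matD\<close>)
  finally show ?thesis
    unfolding riccati_residual_eq_residual_coords[OF A B V K H Ct Y arnoldi C_coords, folded M_def]
    by simp
qed

theorem mainTheorem1:
  fixes n m p j :: nat
    and A B C V K H Ct L Y U W :: "complex mat"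
  assumes dimA: "A \<in> carrier_mat n n" and dimB: "B \<in> carrier_mat n m"
    and dimC: "C \<in> carrier_mat p n" and j1: "j \<ge> 1"
    and brad: "is_BRAD n p j A C V K H"
    and Krank: "mrank K = j*p"
    and dimCt: "Ct \<in> carrier_mat ((j+1)*p) p" and CtV: "adj C = V * Ct"
    and dimL: "L \<in> carrier_mat ((j+1)*p) (j*p)" and Linv: "invertible_mat (adj L * K)"
    and Aj_def: "Aj = adj H * L * inv_m (adj K * L)"
    and Bj_def: "Bj = adj K * adj V * B"
    and Cj_def: "Cj = adj Ct * L * inv_m (adj K * L)"
    and dimY: "Y \<in> carrier_mat (j*p) (j*p)" and Yherm: "adj Y = Y"
    and Ric: "adj Aj * Y + Y * Aj + adj Cj * Cj - Y * Bj * adj Bj * Y = 0\<^sub>m (j*p) (j*p)"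
    and Xj_def: "Xj = V * K * Y * adj K * adj V"
    and dimU: "U \<in> carrier_mat ((j+1)*p) p"
    and U_basis: "cols_basis_of U (ortho_compl ((j+1)*p) (col_space L))"
    and dimW: "W \<in> carrier_mat ((j+1)*p) p"
    and W_basis: "cols_basis_of W (ortho_compl ((j+1)*p) (col_space K))"
    and T_def: "T = K * Y * adj H * W * inv_m (adj U * W)
        + (Ct - (1/2::complex) \<cdot>\<^sub>m (U * inv_m (adj W * U) * adj W * Ct)) * adj Ct * W * inv_m (adj U * W)"
    and Res_def: "Res = adj A * Xj + Xj * A + adj C * C - Xj * B * adj B * Xj"
  shows "invertible_mat (adj W * U) \<and>
    (\<forall>Q R. Q \<in> carrier_mat ((j+1)*p) (2*p) \<and> orthonormal_cols Q \<and>
        R \<in> carrier_mat (2*p) (2*p) \<and> upper_triangular R \<and> hcat U T = Q * R \<longrightarrow>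
      Res = V * (U * adj T + T * adj U) * adj V \<and>
      mrank Res \<le> 2*p \<and>
      (\<forall>N. unitarily_invariant_norm N \<longrightarrow>
         N Res = N (R * four_block_mat (0\<^sub>m p p) (1\<^sub>m p) (1\<^sub>m p) (0\<^sub>m p p) * adj R)))"
proof -
  have V: "V \<in> carrier_mat n ((j+1)*p)" and K: "K \<in> carrier_mat ((j+1)*p) (j*p)"
    and H: "H \<in> carrier_mat ((j+1)*p) (j*p)" and arnoldi: "adj A * V * K = V * H"
    and V_orth: "adj V * V = 1\<^sub>m ((j+1)*p)"
    using brad unfolding is_BRAD_def orthonormal_cols_def by auto
  have LK: "adj L * K \<in> carrier_mat (j*p) (j*p)" and KL_carrier: "adj K * L \<in> carrier_mat (j*p) (j*p)"
    using K dimL by auto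
  have KL: "invertible_mat (adj K * L)"
    using invertible_mat_adjoint_inv_m_adjoint(1)[OF LK Linv] K dimL by (simp add: mat_adjoint_mult carrier_matD)
  have "Aj = adj H * oblique_inverse K L" "Cj = adj Ct * oblique_inverse K L" "Bj = adj K * (adj V * B)"
    unfolding Aj_def Cj_def Bj_def oblique_inverse_def using H dimCt dimL inv_m(1)[OF KL_carrier KL] K V dimB
    by (simp_all add: assoc_mult_mat_dim carrier_matD)
  with Ric have "riccati_residual (adj H * oblique_inverse K L) (adj K * (adj V * B))
      (adj Ct * oblique_inverse K L) Y = 0\<^sub>m (j*p) (j*p)"
    unfolding riccati_residual_def by simp
  note Res = riccati_residual_eq_low_rank[OF dimA dimB V K H dimCt dimL dimY Yherm dimU dimW arnoldi CtV
      KL this U_basis W_basis T_def, unfolded riccati_residual_def, folded Xj_def, folded Res_def]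
  show ?thesis
  proof (intro conjI allI impI)
    show "invertible_mat (adj W * U)"
      by (rule invertible_complement_product[OF K dimL dimU dimW KL U_basis W_basis])
    fix Q R assume "Q \<in> carrier_mat ((j+1)*p) (2*p) \<and> orthonormal_cols Q \<and>
        R \<in> carrier_mat (2*p) (2*p) \<and> upper_triangular R \<and> hcat U T = Q * R"
    then have Q: "Q \<in> carrier_mat ((j+1)*p) (2*p)" and R: "R \<in> carrier_mat (2*p) (2*p)"
      and Q_orth: "adj Q * Q = 1\<^sub>m (2*p)" and UT_QR: "hcat U T = Q * R"
      unfolding orthonormal_cols_def by auto
    have "dim_col T = p" using arg_cong[OF UT_QR, of dim_col] dimU R unfolding hcat_def by simp
    then have T: "T \<in> carrier_mat ((j+1)*p) p" unfolding T_def using dimU by auto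
    have RJR: "R * four_block_mat (0\<^sub>m p p) (1\<^sub>m p) (1\<^sub>m p) (0\<^sub>m p p) * adj R \<in> carrier_mat (2*p) (2*p)"
      using R by (intro carrier_matI) (simp_all add: carrier_matD mult_2)
    note Res_QR = exchange_form_eq_qr_congruence[OF V dimU T Q R UT_QR, folded Res]
    have VQ: "V * Q \<in> carrier_mat n (2*p)" using V Q by auto
    show "Res = V * (U * adj T + T * adj U) * adj V" by (rule Res)
    show "mrank Res \<le> 2 * p" unfolding Res_QR by (rule mrank_congruence_le[OF VQ RJR])
    fix \<N> assume "unitarily_invariant_norm \<N>"
    then show "\<N> Res = \<N> (R * four_block_mat (0\<^sub>m p p) (1\<^sub>m p) (1\<^sub>m p) (0\<^sub>m p p) * adj R)"
      unfolding Res_QR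
      by (rule unitarily_invariant_norm_isometric_congruence[OF _ VQ orthonormal_cols_mult[OF V Q V_orth Q_orth] RJR])
  qed
qed

end
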